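(* Suppose Assumptions 1 and 3 hold and $\boldsymbol{x}\notin\mathcal{Z}$. Then $H(\rho)$ is nonincreasing on $(0,\infty)$. Furthermore, the Lagrange multiplier $\rho^*$ of the KKT system of the projection of $\boldsymbol{x}$ onto $\mathcal{Z}$ satisfies $\rho^*>0$, and $h<0$ for every $h\in\mathcal{K}_H(\rho^* )$.
   Context: Assumption 1: $l:\mathbb{R}\to\mathbb{R}$ is nondecreasing and convex, and $\inf_x l(x)<\lambda$. Assumption 3: $l$ is differentiable and nonconstant, and $l'$ is semismooth with respect to its Clarke subdifferential $\partial l'$. $\mathcal{Z}=\{\boldsymbol{z}\in\mathbb{R}^m:\frac1m\sum_i l(z_i)\le\lambda\}$. The projection problem is $\min_{\boldsymbol{u}}\frac12\|\boldsymbol{u}-\boldsymbol{x}\|^2$ s.t. $\boldsymbol{u}\in\mathcal{Z}$, with KKT system $u_i-x_i+\frac{\rho}{m}l'(u_i)=0$ for all $i$, $\rho(\frac1m\sum_i l(u_i)-\lambda)=0$, $\rho\ge0$, $\frac1m\sum_il(u_i)\le\lambda$. $L(\boldsymbol{u})=\sum_i l(u_i)$, $\nabla L(\boldsymbol{u})=(l'(u_i))_i$, $\partial\nabla L(\boldsymbol{u})=\{\mathrm{diag}(\eta_1,\dots,\eta_m):\eta_i\in\partial l'(u_i)\}$. For $\rho>0$, $\boldsymbol{u}(\rho)$ is the unique solution of $\boldsymbol{u}-\boldsymbol{x}+\frac{\rho}{m}\nabla L(\boldsymbol{u})=\boldsymbol{0}$, $H(\rho)=L(\boldsymbol{u}(\rho))-m\lambda$,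 and $\mathcal{K}_H(\rho)=\{-\nabla L(\boldsymbol{u})^\top(m\mathbf{I}_m+\rho\Lambda)^{-1}\nabla L(\boldsymbol{u}):\Lambda\in\partial\nabla L(\boldsymbol{u})\}$ with $\boldsymbol{u}=\boldsymbol{u}(\rho)$. *)

theory Defs
  imports "HOL-Analysis.Analysis"
begin

definition clarke_subdiff :: "(real \<Rightarrow> real) \<Rightarrow> real \<Rightarrow> real set" where
  "clarke_subdiff f x = convex hull {v. \<exists>xs::nat \<Rightarrow> real. xs \<longlonglongrightarrow> x \<and>
       (\<forall>k. f differentiable (at (xs k))) \<and> (\<lambda>k. deriv f (xs k)) \<longlonglongrightarrow> v}"

definition semismooth_at :: "(real \<Rightarrow> real) \<Rightarrow> real \<Rightarrow> bool" where
  "semismooth_at f x \<longleftrightarrow>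
     (\<exists>\<delta>>0. \<exists>K. \<forall>y\<in>ball x \<delta>. \<forall>z\<in>ball x \<delta>. \<bar>f y - f z\<bar> \<le> K * \<bar>y - z\<bar>) \<and>
     (\<forall>d::real. \<exists>D. ((\<lambda>t. (f (x + t * d) - f x) / t) \<longlongrightarrow> D) (at_right 0)) \<and>
     (\<forall>\<epsilon>>0. \<exists>\<delta>>0. \<forall>h. h \<noteq> 0 \<and> \<bar>h\<bar> < \<delta> \<longrightarrow>
        (\<forall>V\<in>clarke_subdiff f (x + h). \<bar>f (x + h) - f x - V * h\<bar> \<le> \<epsilon> * \<bar>h\<bar>))"

definition semismooth :: "(real \<Rightarrow> real) \<Rightarrow> bool" where
  "semismooth f \<longleftrightarrow> (\<forall>x. semismooth_at f x)"

text \<open>m = CARD('m) is the dimension.\<close>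

definition Lsum :: "(real \<Rightarrow> real) \<Rightarrow> real^'m \<Rightarrow> real" where
  "Lsum l u = (\<Sum>i\<in>UNIV. l (u $ i))"

definition gradL :: "(real \<Rightarrow> real) \<Rightarrow> real^'m \<Rightarrow> real^'m" where
  "gradL l u = (\<chi> i. deriv l (u $ i))"

definition Zset :: "(real \<Rightarrow> real) \<Rightarrow> real \<Rightarrow> (real^'m) set" where
  "Zset l lam = {z. (1 / real CARD('m)) * Lsum l z \<le> lam}"

definition KKT :: "(real \<Rightarrow> real) \<Rightarrow> real \<Rightarrow> real^'m \<Rightarrow> real^'m \<Rightarrow> real \<Rightarrow> bool" where
  "KKT l lam x u \<rho> \<longleftrightarrow>
     (\<forall>i. u $ i - x $ i + (\<rho> / real CARD('m)) * deriv l (u $ i) = 0) \<and>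
     \<rho> * ((1 / real CARD('m)) * Lsum l u - lam) = 0 \<and>
     \<rho> \<ge> 0 \<and>
     (1 / real CARD('m)) * Lsum l u \<le> lam"

definition u_of :: "(real \<Rightarrow> real) \<Rightarrow> real^'m \<Rightarrow> real \<Rightarrow> real^'m" where
  "u_of l x \<rho> = (THE u. u - x + (\<rho> / real CARD('m)) *\<^sub>R gradL l u = 0)"

definition Hfun :: "(real \<Rightarrow> real) \<Rightarrow> real \<Rightarrow> real^'m \<Rightarrow> real \<Rightarrow> real" where
  "Hfun l lam x \<rho> = Lsum l (u_of l x \<rho>) - real CARD('m) * lam"

definition clarke_jac_gradL :: "(real \<Rightarrow> real) \<Rightarrow> real^'m \<Rightarrow> (real^'m^'m) set" where
  "clarke_jac_gradL l u = {\<Lambda>. \<exists>\<eta>. (\<forall>i. \<eta> i \<in> clarke_subdiff (deriv l) (u $ i)) \<and>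
       \<Lambda> = (\<chi> i j. if i = j then \<eta> i else 0)}"

definition K_H :: "(real \<Rightarrow> real) \<Rightarrow> real^'m \<Rightarrow> real \<Rightarrow> real set" where
  "K_H l x \<rho> = (let u = u_of l x \<rho> in
     {- (gradL l u \<bullet> (matrix_inv (real CARD('m) *\<^sub>R mat 1 + \<rho> *\<^sub>R \<Lambda>) *v gradL l u)) | \<Lambda>.
        \<Lambda> \<in> clarke_jac_gradL l u})"

end

theory Submission imports Defs begin

text \<open>For \<open>\<rho> \<ge> 0\<close> the equation defining \<open>u(\<rho>)\<close> decouples into the scalar equations
  \<open>u\<^sub>i + (\<rho>/m) l'(u\<^sub>i) = x\<^sub>i\<close>. Since \<open>l'\<close> is continuous (semismoothness includes local
  Lipschitz continuity), nonnegative and nondecreasing, each has a unique solution, which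
  decreases as \<open>\<rho>\<close> grows; as \<open>l\<close> is nondecreasing, \<open>H\<close> is nonincreasing.
  At a KKT point, \<open>\<rho> = 0\<close> would give \<open>u = x \<notin> Z\<close>, so \<open>\<rho> > 0\<close> and the constraint is
  active; then \<open>\<nabla>L(u) \<noteq> 0\<close>, for otherwise every \<open>u\<^sub>i\<close> minimises \<open>l\<close> and
  \<open>L(u) \<le> m inf l < m\<lambda>\<close>. Clarke subgradients of the nondecreasing \<open>l'\<close> are nonnegative,
  so \<open>mI + \<rho>\<Lambda>\<close> is diagonal with positive entries \<open>d\<^sub>i\<close>, and
  \<open>h = -\<Sum>\<^sub>i l'(u\<^sub>i)\<^sup>2 / d\<^sub>i < 0\<close>.\<close>

lemma convex_differentiable_above_tangent:
  fixes f :: "real \<Rightarrow> real"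
  assumes "convex_on UNIV f" and "f differentiable (at c)"
  shows "f y - f c \<ge> deriv f c * (y - c)"
  using assms by (intro convex_on_imp_above_tangent) (auto simp: DERIV_deriv_iff_real_differentiable)

lemma convex_differentiable_deriv_mono:
  fixes f :: "real \<Rightarrow> real"
  assumes cvx: "convex_on UNIV f" and diff: "\<And>t. f differentiable (at t)"
  shows "mono (deriv f)"
proof
  fix a b :: real
  assume "a \<le> b"
  have "f b - f a \<ge> deriv f a * (b - a)" "f a - f b \<ge> deriv f b * (a - b)"
    using convex_differentiable_above_tangent[OF cvx diff] by auto
  then have "(deriv f b - deriv f a) * (b - a) \<ge> 0"
    by (simp add: algebra_simps)
  with \<open>a \<le> b\<close> show "deriv f a \<le> deriv f b"
    by (cases "a = b") (auto simp: zero_le_mult_iff)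
qed

lemma mono_deriv_nonneg:
  fixes f :: "real \<Rightarrow> real"
  assumes "mono f" and "f differentiable (at t)"
  shows "deriv f t \<ge> 0"
  using assms by (intro mono_on_imp_deriv_nonneg[of UNIV f _ t])
    (auto simp: DERIV_deriv_iff_real_differentiable)

lemma semismooth_at_imp_isCont:
  fixes f :: "real \<Rightarrow> real"
  assumes "semismooth_at f x"
  shows "isCont f x"
proof -
  obtain \<delta> K where "\<delta> > 0"
    and lip: "\<forall>y\<in>ball x \<delta>. \<forall>z\<in>ball x \<delta>. \<bar>f y - f z\<bar> \<le> K * \<bar>y - z\<bar>"
    using assms unfolding semismooth_at_def by blast
  have "\<bar>K\<bar>-lipschitz_on (ball x \<delta>) f"
  proof (rule lipschitz_onI)
    fix y z assume "y \<in> ball x \<delta>" "z \<in> ball x \<delta>"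
    then have "\<bar>f y - f z\<bar> \<le> K * \<bar>y - z\<bar>" using lip by blast
    also have "\<dots> \<le> \<bar>K\<bar> * \<bar>y - z\<bar>" by (intro mult_right_mono) auto
    finally show "dist (f y) (f z) \<le> \<bar>K\<bar> * dist y z" by (simp add: dist_real_def)
  qed simp
  then have "continuous_on (ball x \<delta>) f" by (rule lipschitz_on_continuous_on)
  then show ?thesis
    using \<open>\<delta> > 0\<close> by (simp add: continuous_on_eq_continuous_at)
qed

lemma strict_mono_add_scaled_mono:
  fixes g :: "real \<Rightarrow> real"
  assumes "mono g" and "0 \<le> c"
  shows "strict_mono (\<lambda>t. t + c * g t)"
proof
  fix s t :: real assume "s < t"
  with assms have "c * g s \<le> c * g t" by (simp add: monoD mult_left_mono)
  with \<open>s < t\<close> show "s + c * g s < t + c * g t" by simp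
qed

lemma ex1_add_scaled_mono_eq:
  fixes g :: "real \<Rightarrow> real"
  assumes mono: "mono g" and cont: "\<And>t. isCont g t" and "0 \<le> c"
  shows "\<exists>!t. t + c * g t = a"
proof (rule ex_ex1I)
  let ?F = "\<lambda>t. t + c * g t"
  define lo where "lo = min 0 (a - c * g 0)"
  define hi where "hi = max 0 (a - c * g 0)"
  have "c * g lo \<le> c * g 0" "c * g 0 \<le> c * g hi"
    using \<open>0 \<le> c\<close> by (auto intro!: mult_left_mono monoD[OF mono] simp: lo_def hi_def)
  then have "?F lo \<le> a" "a \<le> ?F hi" "lo \<le> hi"
    by (auto simp: lo_def hi_def)
  then show "\<exists>t. ?F t = a"
    using IVT[of ?F lo a hi] cont by (auto intro!: continuous_intros)
next
  show "\<And>s t. s + c * g s = a \<Longrightarrow> t + c * g t = a \<Longrightarrow> s = t"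
    using strict_mono_add_scaled_mono[OF mono \<open>0 \<le> c\<close>] by (metis strict_mono_eq)
qed

lemma add_scaled_mono_eq_antimono:
  fixes g :: "real \<Rightarrow> real"
  assumes mono: "mono g" and nonneg: "\<And>t. 0 \<le> g t" and "0 \<le> c1" "c1 \<le> c2"
    and s: "s + c1 * g s = a" and t: "t + c2 * g t = a"
  shows "t \<le> s"
proof (rule ccontr)
  assume "\<not> t \<le> s"
  then have "c1 * g s \<le> c1 * g t"
    using \<open>0 \<le> c1\<close> by (simp add: monoD[OF mono] mult_left_mono)
  also have "\<dots> \<le> c2 * g t"
    using \<open>c1 \<le> c2\<close> nonneg by (simp add: mult_right_mono)
  finally show False using s t \<open>\<not> t \<le> s\<close> by linarith
qed

lemma ex1_vec_componentwise:
  assumes "\<And>i. \<exists>!t. P i t"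
  shows "\<exists>!v :: 'a^'n. \<forall>i. P i (v $ i)"
proof (rule ex_ex1I)
  show "\<exists>v :: 'a^'n. \<forall>i. P i (v $ i)"
    using assms by (intro exI[of _ "\<chi> i. THE t. P i t"]) (simp add: theI')
next
  show "\<And>v w. \<forall>i. P i (v $ i) \<Longrightarrow> \<forall>i. P i (w $ i) \<Longrightarrow> v = w"
    using assms by (metis vec_eq_iff)
qed

lemma u_of_eq_iff:
  fixes l :: "real \<Rightarrow> real" and x u :: "real^'m"
  assumes "mono (deriv l)" and "\<And>t. isCont (deriv l) t" and "0 \<le> \<rho>"
  shows "u_of l x \<rho> = u \<longleftrightarrow> (\<forall>i. u $ i + (\<rho> / real CARD('m)) * deriv l (u $ i) = x $ i)"
proof -
  let ?c = "\<rho> / real CARD('m)"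
  have vec_eq: "v - x + ?c *\<^sub>R gradL l v = 0 \<longleftrightarrow> (\<forall>i. v $ i + ?c * deriv l (v $ i) = x $ i)"
    for v :: "real^'m"
    by (auto simp: vec_eq_iff gradL_def algebra_simps)
  have ex1: "\<exists>!v :: real^'m. \<forall>i. v $ i + ?c * deriv l (v $ i) = x $ i"
    by (rule ex1_vec_componentwise, rule ex1_add_scaled_mono_eq) (use assms in auto)
  show ?thesis
    unfolding u_of_def vec_eq using theI'[OF ex1] the1_equality[OF ex1] by blast
qed

lemma Hfun_antimono:
  fixes l :: "real \<Rightarrow> real" and x :: "real^'m"
  assumes "mono l" and dmono: "mono (deriv l)" and "\<And>t. 0 \<le> deriv l t"
    and dcont: "\<And>t. isCont (deriv l) t" and "0 \<le> \<rho>1" "\<rho>1 \<le> \<rho>2"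
  shows "Hfun l lam x \<rho>2 \<le> Hfun l lam x \<rho>1"
proof -
  let ?u1 = "u_of l x \<rho>1" and ?u2 = "u_of l x \<rho>2"
  have sol: "u_of l x \<rho> $ i + \<rho> / real CARD('m) * deriv l (u_of l x \<rho> $ i) = x $ i"
    if "0 \<le> \<rho>" for \<rho> i
    using u_of_eq_iff[OF dmono dcont that, of x "u_of l x \<rho>"] by blast
  have "?u2 $ i \<le> ?u1 $ i" for i
    using assms by (intro add_scaled_mono_eq_antimono[OF dmono _ _ _ sol sol])
      (auto simp: divide_right_mono)
  then have "Lsum l ?u2 \<le> Lsum l ?u1"
    unfolding Lsum_def by (intro sum_mono monoD[OF \<open>mono l\<close>])
  then show ?thesis unfolding Hfun_def by simp
qed

lemma KKT_multiplier_pos: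
  assumes "KKT l lam x u \<rho>" and "x \<notin> Zset l lam"
  shows "0 < \<rho>"
proof (rule ccontr)
  assume "\<not> 0 < \<rho>"
  with assms(1) have "\<rho> = 0" "u = x"
    unfolding KKT_def by (auto simp: vec_eq_iff)
  with assms show False unfolding KKT_def Zset_def by simp
qed

lemma KKT_constraint_active:
  fixes u :: "real^'m"
  assumes "KKT l lam x u \<rho>" and "0 < \<rho>"
  shows "Lsum l u = real CARD('m) * lam"
  using assms unfolding KKT_def by (simp add: field_simps)

lemma KKT_u_of:
  fixes u :: "real^'m"
  assumes "KKT l lam x u \<rho>" and "mono (deriv l)" and "\<And>t. isCont (deriv l) t"
  shows "u_of l x \<rho> = u"
  using assms by (subst u_of_eq_iff) (auto simp: KKT_def algebra_simps)

lemma Lsum_less_if_gradL_eq_0: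
  fixes l :: "real \<Rightarrow> real" and u :: "real^'m"
  assumes "convex_on UNIV l" and "\<And>t. l differentiable (at t)"
    and "l t < lam" and "gradL l u = 0"
  shows "Lsum l u < real CARD('m) * lam"
proof -
  have "l (u $ i) < lam" for i
    using convex_differentiable_above_tangent[OF assms(1,2), of "u $ i" t] assms(3,4)
    by (simp add: gradL_def vec_eq_iff)
  then show ?thesis
    unfolding Lsum_def using sum_strict_mono[of UNIV "\<lambda>i. l (u $ i)" "\<lambda>_. lam"] by simp
qed

lemma clarke_subdiff_mono_nonneg:
  fixes f :: "real \<Rightarrow> real"
  assumes "mono f" and "v \<in> clarke_subdiff f t"
  shows "0 \<le> v"
proof -
  have "{v. \<exists>xs::nat \<Rightarrow> real. xs \<longlonglongrightarrow> t \<and> (\<forall>k. f differentiable (at (xs k))) \<and>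
      (\<lambda>k. deriv f (xs k)) \<longlonglongrightarrow> v} \<subseteq> {0..}"
    using mono_deriv_nonneg[OF \<open>mono f\<close>] by (auto intro: LIMSEQ_le_const)
  then have "clarke_subdiff f t \<subseteq> {0..}"
    unfolding clarke_subdiff_def by (intro hull_minimal) (auto simp: convex_real_interval)
  with assms show ?thesis by auto
qed

definition diag_mat :: "('n \<Rightarrow> 'a::zero) \<Rightarrow> 'a^'n^'n" where
  "diag_mat d = (\<chi> i j. if i = j then d i else 0)"

lemma diag_mat_mult: "diag_mat a ** diag_mat b = diag_mat (\<lambda>i. a i * b i)"
  unfolding diag_mat_def matrix_matrix_mult_def
  by (simp add: vec_eq_iff if_distrib[where f="\<lambda>y. y * _"] if_distrib[where f="\<lambda>y. _ * y"]
      sum.delta sum.delta' cong: if_cong)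

lemma diag_mat_mulv: "diag_mat d *v v = (\<chi> i. d i * v $ i)"
  unfolding diag_mat_def matrix_vector_mult_def
  by (simp add: vec_eq_iff if_distrib[where f="\<lambda>y. y * _"] sum.delta cong: if_cong)

lemma diag_mat_one: "diag_mat (\<lambda>_. 1) = mat 1"
  by (simp add: diag_mat_def mat_def vec_eq_iff)

lemma matrix_inv_eqI:
  fixes A :: "'a::semiring_1^'n^'n"
  assumes "A ** B = mat 1" and "B ** A = mat 1"
  shows "matrix_inv A = B"
proof -
  let ?C = "matrix_inv A"
  have C: "A ** ?C = mat 1 \<and> ?C ** A = mat 1"
    unfolding matrix_inv_def by (rule someI[of _ B]) (use assms in simp)
  have "?C = (?C ** A) ** B"
    by (simp add: assms(1) matrix_mul_assoc[symmetric])
  also have "\<dots> = B" using C by simp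
  finally show ?thesis .
qed

lemma matrix_inv_diag_mat:
  fixes d :: "'n::finite \<Rightarrow> 'a::field"
  assumes "\<And>i. d i \<noteq> 0"
  shows "matrix_inv (diag_mat d) = diag_mat (\<lambda>i. inverse (d i))"
  using assms by (intro matrix_inv_eqI) (simp_all add: diag_mat_mult diag_mat_one[symmetric])

lemma inner_matrix_inv_diag_mat_pos:
  fixes d :: "'n::finite \<Rightarrow> real" and v :: "real^'n"
  assumes "\<And>i. 0 < d i" and "v \<noteq> 0"
  shows "0 < v \<bullet> (matrix_inv (diag_mat d) *v v)"
proof -
  obtain i0 where "v $ i0 \<noteq> 0" using \<open>v \<noteq> 0\<close> by (auto simp: vec_eq_iff)
  have "v \<bullet> (matrix_inv (diag_mat d) *v v) = (\<Sum>i\<in>UNIV. (v $ i)\<^sup>2 / d i)"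
    using assms(1) by (simp add: matrix_inv_diag_mat less_imp_neq[symmetric] diag_mat_mulv
        inner_vec_def power2_eq_square field_simps)
  also have "\<dots> > 0"
    using \<open>v $ i0 \<noteq> 0\<close> assms(1) by (intro sum_pos2[of UNIV i0]) (auto intro: divide_nonneg_pos)
  finally show ?thesis .
qed

lemma K_H_neg:
  fixes l :: "real \<Rightarrow> real" and x :: "real^'m"
  assumes dmono: "mono (deriv l)" and "0 \<le> \<rho>"
    and grad: "gradL l (u_of l x \<rho>) \<noteq> 0" and "h \<in> K_H l x \<rho>"
  shows "h < 0"
proof -
  let ?u = "u_of l x \<rho>"
  obtain \<eta> where \<eta>: "\<And>i. \<eta> i \<in> clarke_subdiff (deriv l) (?u $ i)"
    and h: "h = - (gradL l ?u \<bullet> (matrix_inv (real CARD('m) *\<^sub>R mat 1 + \<rho> *\<^sub>R diag_mat \<eta>)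
        *v gradL l ?u))"
    using \<open>h \<in> K_H l x \<rho>\<close> unfolding K_H_def clarke_jac_gradL_def diag_mat_def Let_def by blast
  define d where "d i = real CARD('m) + \<rho> * \<eta> i" for i
  have "real CARD('m) *\<^sub>R mat 1 + \<rho> *\<^sub>R diag_mat \<eta> = diag_mat d"
    by (simp add: diag_mat_def mat_def d_def vec_eq_iff)
  moreover have "0 < d i" for i
    using clarke_subdiff_mono_nonneg[OF dmono \<eta>] \<open>0 \<le> \<rho>\<close>
    by (simp add: d_def add_pos_nonneg)
  ultimately show ?thesis
    using h inner_matrix_inv_diag_mat_pos[OF _ grad] by simp
qed

theorem mainTheorem10:
  fixes l :: "real \<Rightarrow> real" and lam :: real and x :: "real^'m"
  assumes mono: "mono l" and cvx: "convex_on UNIV l"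
    and below: "\<exists>t. l t < lam"
    and diff: "\<And>t. l differentiable (at t)"
    and nonconst: "\<exists>a b. l a \<noteq> l b"
    and ssm: "semismooth (deriv l)"
    and notin: "x \<notin> Zset l lam"
  shows "(\<forall>\<rho>1 \<rho>2. 0 < \<rho>1 \<and> \<rho>1 \<le> \<rho>2 \<longrightarrow> Hfun l lam x \<rho>2 \<le> Hfun l lam x \<rho>1) \<and>
         (\<forall>u \<rho>. KKT l lam x u \<rho> \<longrightarrow> \<rho> > 0 \<and> (\<forall>h\<in>K_H l x \<rho>. h < 0))"
proof (intro conjI allI impI)
  have dmono: "mono (deriv l)"
    using cvx diff by (rule convex_differentiable_deriv_mono)
  have dcont: "\<And>t. isCont (deriv l) t"
    using ssm unfolding semismooth_def by (blast intro: semismooth_at_imp_isCont)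
  show "Hfun l lam x \<rho>2 \<le> Hfun l lam x \<rho>1" if "0 < \<rho>1 \<and> \<rho>1 \<le> \<rho>2" for \<rho>1 \<rho>2
    using that by (intro Hfun_antimono[OF mono dmono mono_deriv_nonneg[OF mono diff] dcont]) auto
  fix u \<rho> assume kkt: "KKT l lam x u \<rho>"
  show pos: "0 < \<rho>"
    using kkt notin by (rule KKT_multiplier_pos)
  have u: "u_of l x \<rho> = u"
    using kkt dmono dcont by (rule KKT_u_of)
  have "gradL l u \<noteq> 0"
    using KKT_constraint_active[OF kkt pos] Lsum_less_if_gradL_eq_0[OF cvx diff] below by force
  then show "\<forall>h\<in>K_H l x \<rho>. h < 0"
    using K_H_neg[OF dmono less_imp_le[OF pos], of x] u by blast
qed

end
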